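(* Let $\mathcal{D}$ be an $S(2,k,v)$ with $v>k^3-2k^2+2k$. Then $G_0=0$-$\mathrm{BIG}(\mathcal{D})$ is not silver.
   Context: A Steiner $2$-design $S(2,k,v)$ ($2<k<v$) is a pair $(V,\mathcal{B})$ with $|V|=v$ and $\mathcal{B}$ a collection of $k$-subsets of $V$ (blocks) such that every $2$-subset of $V$ lies in exactly one block. The $0$-block intersection graph $0$-$\mathrm{BIG}(\mathcal{D})$ has the blocks as vertices, two blocks adjacent iff they are disjoint; it is a regular graph. An $\alpha$-set of a graph is a maximum independent set. Let $G$ be an $r$-regular graph and $c$ a proper $(r+1)$-coloring of $G$. A vertex $x$ is rainbow with respect to $c$ if every one of the $r+1$ colors appears on $N[x]=N(x)\cup\{x\}$. Given an $\alpha$-set $I$, $c$ is silver with respect to $I$ if every $x\in I$ is rainbow; $G$ is silver if it admits a silver coloring with respect to some $\alpha$-set. *)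

theory Defs
  imports Main
begin

definition steiner_2_design :: "'a set \<Rightarrow> 'a set set \<Rightarrow> nat \<Rightarrow> nat \<Rightarrow> bool" where
  "steiner_2_design V B k v \<longleftrightarrow>
     finite V \<and> card V = v \<and> 2 < k \<and> k < v \<and>
     (\<forall>b\<in>B. b \<subseteq> V \<and> card b = k) \<and>
     (\<forall>x\<in>V. \<forall>y\<in>V. x \<noteq> y \<longrightarrow> (\<exists>!b. b \<in> B \<and> {x, y} \<subseteq> b))"

(* simple graphs: vertex set and symmetric irreflexive adjacency predicate *)
type_synonym 'v graph = "'v set \<times> ('v \<Rightarrow> 'v \<Rightarrow> bool)"

definition verts :: "'v graph \<Rightarrow> 'v set" where "verts G = fst G"
definition adj :: "'v graph \<Rightarrow> 'v \<Rightarrow> 'v \<Rightarrow> bool" where "adj G = snd G"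

definition nbhd :: "'v graph \<Rightarrow> 'v \<Rightarrow> 'v set" where
  "nbhd G x = {y \<in> verts G. adj G x y}"

definition closed_nbhd :: "'v graph \<Rightarrow> 'v \<Rightarrow> 'v set" where
  "closed_nbhd G x = insert x (nbhd G x)"

definition regular_graph :: "'v graph \<Rightarrow> nat \<Rightarrow> bool" where
  "regular_graph G r \<longleftrightarrow> (\<forall>x\<in>verts G. card (nbhd G x) = r)"

definition independent_set :: "'v graph \<Rightarrow> 'v set \<Rightarrow> bool" where
  "independent_set G I \<longleftrightarrow> I \<subseteq> verts G \<and> (\<forall>x\<in>I. \<forall>y\<in>I. \<not> adj G x y)"

definition alpha_set :: "'v graph \<Rightarrow> 'v set \<Rightarrow> bool" where
  "alpha_set G I \<longleftrightarrow> independent_set G I \<and> finite I \<and>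
     (\<forall>J. independent_set G J \<longrightarrow> finite J \<and> card J \<le> card I)"

definition proper_coloring :: "'v graph \<Rightarrow> nat \<Rightarrow> ('v \<Rightarrow> nat) \<Rightarrow> bool" where
  "proper_coloring G n c \<longleftrightarrow>
     (\<forall>x\<in>verts G. c x < n) \<and>
     (\<forall>x\<in>verts G. \<forall>y\<in>verts G. adj G x y \<longrightarrow> c x \<noteq> c y)"

definition rainbow :: "'v graph \<Rightarrow> nat \<Rightarrow> ('v \<Rightarrow> nat) \<Rightarrow> 'v \<Rightarrow> bool" where
  "rainbow G n c x \<longleftrightarrow> {0..<n} \<subseteq> c ` closed_nbhd G x"

definition silver_coloring :: "'v graph \<Rightarrow> nat \<Rightarrow> ('v \<Rightarrow> nat) \<Rightarrow> 'v set \<Rightarrow> bool" where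
  "silver_coloring G r c I \<longleftrightarrow>
     proper_coloring G (r + 1) c \<and> (\<forall>x\<in>I. rainbow G (r + 1) c x)"

definition silver :: "'v graph \<Rightarrow> bool" where
  "silver G \<longleftrightarrow> (\<exists>r. regular_graph G r \<and>
     (\<exists>I c. alpha_set G I \<and> silver_coloring G r c I))"

definition zero_BIG :: "'a set set \<Rightarrow> 'a set graph" where
  "zero_BIG B = (B, \<lambda>b1 b2. b1 \<noteq> b2 \<and> b1 \<inter> b2 = {})"

end

theory Submission
  imports Defs
begin

(* Let D = (V, B) be an S(2,k,v) and suppose the 0-block intersection graph
   G0 is silver: there is an alpha-set I (a largest family of pairwise intersecting blocks)
   and a proper (r+1)-colouring c of the r-regular graph G0 for which every block of I is
   rainbow.  Since N[X] has exactly r+1 vertices, c is injective on N[X] for X in I.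

   (1) The blocks through a point form an intersecting family of size >= (v-1)/(k-1), so
       |I| > k^2-k+1 by the hypothesis on v; an intersecting family of blocks that large
       has a common point p (a block X misses some point x of B0, and the blocks through x
       meet X in pairwise distinct points, so at most k blocks pass through x).
   (2) A block X avoiding p meets at most k blocks of I; as |I| > 2k, any two blocks
       X, Y avoiding p lie in N[B0] for some B0 in I, hence get different colours.
   (3) If B0 in I meets a block X avoiding p, then c X = c B0: the colour c X occurs in
       N[B0], and by (2) only on X itself, which is not in N[B0] unless X = B0.
   Taking q in B0 - {p} and two blocks through q avoiding p contradicts (2) and (3). *)

section \<open>Elementary facts on Steiner 2-designs\<close>

locale steiner_design =
  fixes V :: "'a set" and B :: "'a set set" and k v :: nat
  assumes design: "steiner_2_design V B k v"
begin

lemma finite_points: "finite V"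
  and card_points: "card V = v"
  and k_gt_2: "2 < k"
  and k_less_v: "k < v"
  and block_subset: "X \<in> B \<Longrightarrow> X \<subseteq> V"
  and card_block: "X \<in> B \<Longrightarrow> card X = k"
  using design unfolding steiner_2_design_def by blast+

lemma unique_block:
  assumes "x \<in> V" "y \<in> V" "x \<noteq> y"
  shows "\<exists>!X. X \<in> B \<and> {x, y} \<subseteq> X"
proof -
  from design have "\<forall>x\<in>V. \<forall>y\<in>V. x \<noteq> y \<longrightarrow> (\<exists>!X. X \<in> B \<and> {x, y} \<subseteq> X)"
    unfolding steiner_2_design_def by (elim conjE) assumption
  with assms show ?thesis by simp
qed

lemma finite_block: "X \<in> B \<Longrightarrow> finite X"
  using block_subset finite_points finite_subset by blast

lemma finite_blocks: "finite B"
  using block_subset finite_points by (meson Pow_iff finite_Pow_iff finite_subset subsetI)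

lemma block_nonempty: "X \<in> B \<Longrightarrow> X \<noteq> {}"
  using card_block k_gt_2 by fastforce

lemma block_through_points:
  assumes "x \<in> V" "y \<in> V" "x \<noteq> y"
  obtains X where "X \<in> B" "x \<in> X" "y \<in> X"
  using unique_block[OF assms] that by blast

lemma block_unique:
  assumes "X \<in> B" "Y \<in> B" "x \<in> X" "y \<in> X" "x \<in> Y" "y \<in> Y" "x \<noteq> y"
  shows "X = Y"
proof -
  have "x \<in> V" "y \<in> V" using assms block_subset by auto
  then show ?thesis using unique_block[of x y] assms by auto
qed

text \<open>Blocks through a point x meet a block X not containing x in pairwise distinct points,
  so at most k of them meet X.\<close>

lemma pencil_meets_block:
  assumes F: "F \<subseteq> B" "\<forall>C\<in>F. x \<in> C" and X: "X \<in> B" "x \<notin> X"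
  shows "card {C\<in>F. C \<inter> X \<noteq> {}} \<le> k"
proof -
  let ?M = "{C\<in>F. C \<inter> X \<noteq> {}}"
  define trace where "trace C = (SOME y. y \<in> C \<inter> X)" for C
  have trace: "trace C \<in> C \<inter> X" if "C \<in> ?M" for C
    using that someI_ex[of "\<lambda>y. y \<in> C \<inter> X"] unfolding trace_def by blast
  have "inj_on trace ?M"
  proof (rule inj_onI)
    fix C D assume "C \<in> ?M" "D \<in> ?M" "trace C = trace D"
    moreover have "x \<noteq> trace C" using trace \<open>C \<in> ?M\<close> X(2) by blast
    ultimately show "C = D"
      using trace[of C] trace[of D] F block_unique[of C D x "trace C"] by auto
  qed
  moreover have "trace ` ?M \<subseteq> X" using trace by blast
  ultimately have "card ?M \<le> card X"
    using card_inj_on_le finite_block[OF X(1)] by blast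
  then show ?thesis using card_block[OF X(1)] by simp
qed

text \<open>The blocks through a point cover the other v - 1 points, k - 1 at a time.\<close>

lemma star_lower_bound:
  assumes "q \<in> V"
  shows "v - 1 \<le> card {X\<in>B. q \<in> X} * (k - 1)"
proof -
  let ?S = "{X\<in>B. q \<in> X}"
  have "V - {q} \<subseteq> (\<Union>X\<in>?S. X - {q})"
  proof
    fix y assume "y \<in> V - {q}"
    then obtain X where "X \<in> B" "q \<in> X" "y \<in> X"
      using block_through_points[of q y] assms by auto
    then show "y \<in> (\<Union>X\<in>?S. X - {q})" using \<open>y \<in> V - {q}\<close> by auto
  qed
  then have "card (V - {q}) \<le> card (\<Union>X\<in>?S. X - {q})"
    by (intro card_mono) (auto simp: finite_blocks finite_block)
  also have "\<dots> \<le> (\<Sum>X\<in>?S. card (X - {q}))"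
    by (rule card_UN_le) (simp add: finite_blocks)
  also have "\<dots> = card ?S * (k - 1)"
    by (simp add: card_block finite_block)
  finally show ?thesis using assms card_points finite_points by simp
qed

text \<open>Through a point q \<noteq> p of a block B0 \<ni> p and a point outside a set S \<supseteq> B0 of fewer
  than v points there is a block; it avoids p, since the only block through p and q is B0.\<close>

lemma block_avoiding_point:
  assumes B0: "B0 \<in> B" "p \<in> B0" "q \<in> B0" "q \<noteq> p"
    and S: "B0 \<subseteq> S" "finite S" "card S < v"
  obtains X where "X \<in> B" "q \<in> X" "p \<notin> X" "\<not> X \<subseteq> S"
proof -
  have "\<not> V \<subseteq> S"
  proof
    assume "V \<subseteq> S"
    then have "card V \<le> card S" by (rule card_mono[OF S(2)])
    with S(3) card_points show False by simp
  qed
  then obtain w where w: "w \<in> V" "w \<notin> S" by blast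
  have "q \<in> V" using B0 block_subset by blast
  moreover have "q \<noteq> w" using B0(3) S(1) w(2) by blast
  ultimately obtain X where X: "X \<in> B" "q \<in> X" "w \<in> X"
    using block_through_points w(1) by blast
  have "X \<noteq> B0" using X(3) w(2) S(1) by blast
  then have "p \<notin> X" using block_unique[OF X(1) B0(1), of p q] X(2) B0 by blast
  then show thesis using that X w(2) by blast
qed

text \<open>A family of more than k^2 - k + 1 pairwise intersecting blocks has a common point:
  otherwise each point of a fixed member B0 lies on at most k members.\<close>

lemma intersecting_family_has_common_point:
  assumes F: "F \<subseteq> B" and meet: "\<forall>C\<in>F. \<forall>D\<in>F. C \<inter> D \<noteq> {}"
    and large: "k * k - k + 1 < card F"
  shows "\<exists>p. \<forall>C\<in>F. p \<in> C"
proof (rule ccontr)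
  assume "\<nexists>p. \<forall>C\<in>F. p \<in> C"
  then have missing: "\<exists>X\<in>F. x \<notin> X" for x by blast
  have "finite F" using F finite_blocks finite_subset by blast
  obtain B0 where B0: "B0 \<in> F" using large by (metis card.empty ex_in_conv less_zeroE)
  have "B0 \<in> B" using B0 F by blast
  have through_point: "card ({C\<in>F. x \<in> C} - {B0}) \<le> k - 1" if "x \<in> B0" for x
  proof -
    obtain X where X: "X \<in> F" "x \<notin> X" using missing by blast
    have "card {C\<in>{C\<in>F. x \<in> C}. C \<inter> X \<noteq> {}} \<le> k"
      by (rule pencil_meets_block) (use F X in auto)
    moreover have "{C\<in>{C\<in>F. x \<in> C}. C \<inter> X \<noteq> {}} = {C\<in>F. x \<in> C}"
      using meet X(1) by blast
    ultimately have "card {C\<in>F. x \<in> C} \<le> k" by simp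
    moreover have "B0 \<in> {C\<in>F. x \<in> C}" using B0 that by blast
    ultimately show ?thesis using \<open>finite F\<close> by simp
  qed
  have "F - {B0} \<subseteq> (\<Union>x\<in>B0. {C\<in>F. x \<in> C} - {B0})"
  proof
    fix C assume C: "C \<in> F - {B0}"
    then obtain x where "x \<in> B0" "x \<in> C" using meet B0 by blast
    then show "C \<in> (\<Union>x\<in>B0. {C\<in>F. x \<in> C} - {B0})" using C by blast
  qed
  moreover have "finite (\<Union>x\<in>B0. {C\<in>F. x \<in> C} - {B0})"
    using \<open>finite F\<close> by (rule rev_finite_subset) blast
  ultimately have "card (F - {B0}) \<le> card (\<Union>x\<in>B0. {C\<in>F. x \<in> C} - {B0})"
    by (rule card_mono[rotated])
  also have "\<dots> \<le> (\<Sum>x\<in>B0. card ({C\<in>F. x \<in> C} - {B0}))"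
    using finite_block[OF \<open>B0 \<in> B\<close>] \<open>finite F\<close> by (intro card_UN_le) auto
  also have "\<dots> \<le> (\<Sum>x\<in>B0. k - 1)" by (intro sum_mono through_point)
  also have "\<dots> = k * (k - 1)" using card_block[OF \<open>B0 \<in> B\<close>] by simp
  finally have "card F \<le> k * (k - 1) + 1" using B0 \<open>finite F\<close> by simp
  moreover have "k * (k - 1) + 1 = k * k - k + 1" by (simp add: diff_mult_distrib2)
  ultimately show False using large by linarith
qed

end

section \<open>The 0-block intersection graph\<close>

lemma verts_zero_BIG: "verts (zero_BIG B) = B"
  by (simp add: verts_def zero_BIG_def)

lemma adj_zero_BIG: "adj (zero_BIG B) X Y \<longleftrightarrow> X \<noteq> Y \<and> X \<inter> Y = {}"
  by (simp add: adj_def zero_BIG_def)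

lemma closed_nbhd_zero_BIG:
  "closed_nbhd (zero_BIG B) X = insert X {Y\<in>B. X \<noteq> Y \<and> X \<inter> Y = {}}"
  by (simp add: closed_nbhd_def nbhd_def verts_zero_BIG adj_zero_BIG)

text \<open>In a finite r-regular loopless graph N[x] has r + 1 vertices, so a colouring with
  r + 1 colours that makes x rainbow is injective on N[x].\<close>

lemma rainbow_injective:
  assumes "regular_graph G r" "x \<in> verts G" "finite (verts G)" "\<not> adj G x x"
    and "rainbow G (r + 1) c x"
  shows "inj_on c (closed_nbhd G x)"
proof -
  let ?N = "closed_nbhd G x"
  have "finite ?N" using assms(3) by (simp add: closed_nbhd_def nbhd_def)
  have "card ?N = r + 1"
    using assms(1,2,4) \<open>finite ?N\<close> by (simp add: closed_nbhd_def nbhd_def regular_graph_def)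
  moreover have "r + 1 \<le> card (c ` ?N)"
    using assms(5) \<open>finite ?N\<close> card_mono[of "c ` ?N" "{0..<r + 1}"] by (simp add: rainbow_def)
  moreover have "card (c ` ?N) \<le> card ?N" using \<open>finite ?N\<close> by (rule card_image_le)
  ultimately have "card (c ` ?N) = card ?N" by linarith
  then show ?thesis by (rule eq_card_imp_inj_on[OF \<open>finite ?N\<close>])
qed

context steiner_design
begin

lemma independent_zero_BIG:
  "independent_set (zero_BIG B) F \<longleftrightarrow> F \<subseteq> B \<and> (\<forall>C\<in>F. \<forall>D\<in>F. C \<inter> D \<noteq> {})"
proof -
  have "\<not> adj (zero_BIG B) C D \<longleftrightarrow> C \<inter> D \<noteq> {}" if "C \<in> B" for C D
    using block_nonempty[OF that] by (auto simp: adj_zero_BIG)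
  then show ?thesis unfolding independent_set_def verts_zero_BIG by (metis subsetD)
qed

text \<open>An alpha-set dominates every star, hence has at least (v - 1)/(k - 1) blocks.\<close>

lemma alpha_set_lower_bound:
  assumes "alpha_set (zero_BIG B) I"
  shows "v - 1 \<le> card I * (k - 1)"
proof -
  obtain q where "q \<in> V" using card_points k_less_v by fastforce
  have "independent_set (zero_BIG B) {X\<in>B. q \<in> X}" unfolding independent_zero_BIG by blast
  then have "card {X\<in>B. q \<in> X} \<le> card I" using assms unfolding alpha_set_def by blast
  then show ?thesis using star_lower_bound[OF \<open>q \<in> V\<close>] by (meson le_trans mult_le_mono1)
qed

section \<open>Rainbow stars\<close>

text \<open>The situation derived from a silver colouring: I is a set of more than 2k blocks through
  the point p, and c is injective on each N[X], X \<in> I, and realizes there every colour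
  used on blocks.\<close>

definition rainbow_star :: "'a set set \<Rightarrow> 'a \<Rightarrow> ('a set \<Rightarrow> nat) \<Rightarrow> bool" where
  "rainbow_star I p c \<longleftrightarrow> I \<subseteq> B \<and> 2 * k < card I \<and> (\<forall>C\<in>I. p \<in> C) \<and>
     (\<forall>X\<in>I. inj_on c (closed_nbhd (zero_BIG B) X) \<and> c ` B \<subseteq> c ` closed_nbhd (zero_BIG B) X)"

lemma rainbow_starD:
  assumes "rainbow_star I p c"
  shows "I \<subseteq> B" "2 * k < card I" "C \<in> I \<Longrightarrow> p \<in> C"
    "X \<in> I \<Longrightarrow> inj_on c (closed_nbhd (zero_BIG B) X)"
    "X \<in> I \<Longrightarrow> c ` B \<subseteq> c ` closed_nbhd (zero_BIG B) X"
  using assms unfolding rainbow_star_def by blast+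

text \<open>Two distinct blocks avoiding p are both disjoint from some member of I, so lie in its
  closed neighbourhood and receive distinct colours.\<close>

lemma rainbow_star_distinct_colours:
  assumes star: "rainbow_star I p c"
    and XY: "X \<in> B" "Y \<in> B" "p \<notin> X" "p \<notin> Y" "X \<noteq> Y"
  shows "c X \<noteq> c Y"
proof -
  have I: "I \<subseteq> B" "2 * k < card I" "\<forall>C\<in>I. p \<in> C" using rainbow_starD(1-3)[OF star] by auto
  let ?T = "{C\<in>I. C \<inter> X \<noteq> {}} \<union> {C\<in>I. C \<inter> Y \<noteq> {}}"
  have "card ?T \<le> k + k"
    using card_Un_le[of "{C\<in>I. C \<inter> X \<noteq> {}}" "{C\<in>I. C \<inter> Y \<noteq> {}}"]
      pencil_meets_block[OF I(1,3) XY(1,3)] pencil_meets_block[OF I(1,3) XY(2,4)] by linarith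
  have "finite I" using I(2) by (metis card.infinite not_less_zero)
  have "\<not> I \<subseteq> ?T"
  proof
    assume "I \<subseteq> ?T"
    then have "card I \<le> card ?T" using \<open>finite I\<close> by (intro card_mono) auto
    with \<open>card ?T \<le> k + k\<close> I(2) show False by linarith
  qed
  then obtain B0 where B0: "B0 \<in> I" "B0 \<inter> X = {}" "B0 \<inter> Y = {}" by blast
  then have "X \<in> closed_nbhd (zero_BIG B) B0" "Y \<in> closed_nbhd (zero_BIG B) B0"
    using XY I(3) by (auto simp: closed_nbhd_zero_BIG)
  moreover have "inj_on c (closed_nbhd (zero_BIG B) B0)" using rainbow_starD(4)[OF star B0(1)] .
  ultimately show ?thesis using XY(5) by (meson inj_onD)
qed

lemma rainbow_star_colour_of_meeting_block:
  assumes star: "rainbow_star I p c"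
    and X: "X \<in> B" "p \<notin> X" and B0: "B0 \<in> I" "B0 \<inter> X \<noteq> {}"
  shows "c B0 = c X"
proof -
  have "c X \<in> c ` closed_nbhd (zero_BIG B) B0"
    using rainbow_starD(5)[OF star B0(1)] imageI[OF X(1)] by (rule subsetD)
  then obtain Z where Z: "Z \<in> closed_nbhd (zero_BIG B) B0" "c Z = c X" by (metis imageE)
  show ?thesis
  proof (cases "Z = B0")
    case True
    then show ?thesis using Z(2) by simp
  next
    case False
    then have "Z \<in> B" "B0 \<inter> Z = {}" using Z(1) by (auto simp: closed_nbhd_zero_BIG)
    moreover have "p \<in> B0" using rainbow_starD(3)[OF star B0(1)] .
    ultimately have "p \<notin> Z" by blast
    have "Z = X"
    proof (rule ccontr)
      assume "Z \<noteq> X"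
      then have "c Z \<noteq> c X"
        by (rule rainbow_star_distinct_colours[OF star \<open>Z \<in> B\<close> X(1) \<open>p \<notin> Z\<close> X(2)])
      then show False using Z(2) by contradiction
    qed
    with \<open>B0 \<inter> Z = {}\<close> B0(2) show ?thesis by simp
  qed
qed

text \<open>Two blocks through a point q \<noteq> p of a member B0 of I both get the colour of B0,
  although they avoid p; so rainbow stars do not exist once v > 2k.\<close>

lemma no_rainbow_star:
  assumes "2 * k < v"
  shows "\<not> rainbow_star I p c"
proof
  assume star: "rainbow_star I p c"
  obtain B0 where B0: "B0 \<in> I" using rainbow_starD(2)[OF star] by (metis card.empty ex_in_conv not_less_zero)
  have "B0 \<in> B" using rainbow_starD(1)[OF star] B0 by blast
  have "p \<in> B0" using rainbow_starD(3)[OF star B0] .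
  have "finite B0" "card B0 = k" using finite_block card_block \<open>B0 \<in> B\<close> by auto
  then have "\<not> card B0 \<le> Suc 0" using k_gt_2 by simp
  then obtain q where q: "q \<in> B0" "q \<noteq> p"
    using card_le_Suc0_iff_eq[OF \<open>finite B0\<close>] \<open>p \<in> B0\<close> by blast
  have "card B0 < v" using \<open>card B0 = k\<close> k_less_v by simp
  with \<open>finite B0\<close> obtain X where X: "X \<in> B" "q \<in> X" "p \<notin> X" "\<not> X \<subseteq> B0"
    by (rule block_avoiding_point[OF \<open>B0 \<in> B\<close> \<open>p \<in> B0\<close> q order_refl])
  have "card (B0 \<union> X) \<le> card B0 + card X" by (rule card_Un_le)
  then have "card (B0 \<union> X) < v" using \<open>card B0 = k\<close> card_block[OF X(1)] assms by linarith
  moreover have "finite (B0 \<union> X)" using \<open>finite B0\<close> finite_block[OF X(1)] by blast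
  ultimately obtain Y where Y: "Y \<in> B" "q \<in> Y" "p \<notin> Y" "\<not> Y \<subseteq> B0 \<union> X"
    using block_avoiding_point[OF \<open>B0 \<in> B\<close> \<open>p \<in> B0\<close> q Un_upper1] by blast
  have "B0 \<inter> X \<noteq> {}" "B0 \<inter> Y \<noteq> {}" using q X(2) Y(2) by blast+
  then have "c B0 = c X" "c B0 = c Y"
    using rainbow_star_colour_of_meeting_block[OF star _ _ B0] X(1,3) Y(1,3) by blast+
  moreover have "X \<noteq> Y" using Y(4) by blast
  ultimately show False using rainbow_star_distinct_colours[OF star X(1) Y(1) X(3) Y(3)] by simp
qed

end

lemma parameter_bounds:
  fixes k v :: nat
  assumes k: "2 < k" and v: "int v > int k ^ 3 - 2 * int k ^ 2 + 2 * int k"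
  shows "(k - 1) * (k * k - k + 1) < v - 1" "2 * k < v" "2 * k < k * k - k + 1"
proof -
  obtain m where m: "k = Suc m" using k by (cases k) auto
  have "int ((k - 1) * (k * k - k + 1)) = int m * (int m * int m + int m + 1)"
    using m by (simp add: algebra_simps)
  also have "\<dots> = int k ^ 3 - 2 * int k ^ 2 + 2 * int k - 1"
    using m by (simp add: power3_eq_cube power2_eq_square algebra_simps)
  finally have product: "int ((k - 1) * (k * k - k + 1)) = int k ^ 3 - 2 * int k ^ 2 + 2 * int k - 1" .
  have "int k ^ 3 - 2 * int k ^ 2 = int k ^ 2 * (int k - 2)"
    by (simp add: algebra_simps power2_eq_square power3_eq_cube)
  moreover have "int k ^ 2 * (int k - 2) \<ge> 0" using k by simp
  ultimately show "2 * k < v" using v by linarith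
  then show "(k - 1) * (k * k - k + 1) < v - 1" using product v by linarith
  have "3 * k \<le> k * k" using k by simp
  then show "2 * k < k * k - k + 1" by linarith
qed

theorem theorem7:
  fixes V :: "'a set" and B :: "'a set set" and k v :: nat
  assumes "steiner_2_design V B k v"
    and "int v > int k ^ 3 - 2 * int k ^ 2 + 2 * int k"
  shows "\<not> silver (zero_BIG B)"
proof
  assume "silver (zero_BIG B)"
  then obtain r I c where regular: "regular_graph (zero_BIG B) r"
    and alpha: "alpha_set (zero_BIG B) I" and silver: "silver_coloring (zero_BIG B) r c I"
    unfolding silver_def by blast
  interpret steiner_design V B k v by (rule steiner_design.intro) (rule assms(1))
  note bounds = parameter_bounds[OF k_gt_2 assms(2)]
  txt \<open>I is a large intersecting family, hence a star with centre p.\<close>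
  have I: "I \<subseteq> B" "\<forall>C\<in>I. \<forall>D\<in>I. C \<inter> D \<noteq> {}"
    using alpha independent_zero_BIG unfolding alpha_set_def by auto
  have "(k - 1) * (k * k - k + 1) < card I * (k - 1)"
    using bounds(1) alpha_set_lower_bound[OF alpha] by (rule less_le_trans)
  then have large: "k * k - k + 1 < card I" by (metis mult.commute mult_less_cancel2)
  obtain p where "\<forall>C\<in>I. p \<in> C" using intersecting_family_has_common_point[OF I large] by blast
  txt \<open>Rainbow vertices of I see each of the r + 1 colours exactly once.\<close>
  moreover have "inj_on c (closed_nbhd (zero_BIG B) X)" if "X \<in> I" for X
    using silver rainbow_injective[OF regular] that I(1) finite_blocks
    by (auto simp: silver_coloring_def verts_zero_BIG adj_zero_BIG)
  moreover have "c ` B \<subseteq> c ` closed_nbhd (zero_BIG B) X" if "X \<in> I" for X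
    using silver that
    unfolding silver_coloring_def proper_coloring_def rainbow_def verts_zero_BIG by fastforce
  ultimately have "rainbow_star I p c"
    using I(1) large bounds(3) unfolding rainbow_star_def by auto
  then show False using no_rainbow_star bounds(2) by blast
qed

end
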